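(* Let $n\ge 3$ and let $\lambda,\mu$ be integers with $1\le \mu\le \lambda$ and $\lambda+\mu\le n-1$. Let $K_n^{-}(\lambda,\mu)$ denote the graph obtained from the complete graph $K_n$ by removing all edges of a subgraph isomorphic to the complete bipartite graph $K_{\lambda,\mu}$. Then $$\dim_l(K_n^{-}(\lambda,\mu))=\begin{cases} n-2, & \mu=1,\\ n-3, & \mu\ge 2.\end{cases}$$
   Context: All graphs are finite, simple and connected. For vertices $x,y$ of a graph $G$, $d_G(x,y)$ is the length of a shortest $x,y$-path. A vertex $w$ distinguishes vertices $u,v$ if $d_G(u,w)\neq d_G(v,w)$. A set $W\subseteq V(G)$ is a local resolving set of $G$ if for every pair of adjacent vertices $u,v\in V(G)\setminus W$ some vertex of $W$ distinguishes $u$ and $v$. The local metric dimension $\dim_l(G)$ is the minimum cardinality of a local resolving set of $G$. The graph $K_n^{-}(\lambda,\mu)$ does not depend (up to isomorphism) on the choice of the removed $K_{\lambda,\mu}$. *)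

theory Defs
  imports Main
begin

text \<open>A simple graph is given by a vertex set V and a symmetric irreflexive
adjacency relation E (edges only between vertices of V).\<close>

definition walk :: "('a \<Rightarrow> 'a \<Rightarrow> bool) \<Rightarrow> 'a set \<Rightarrow> 'a list \<Rightarrow> bool" where
  "walk E V xs \<longleftrightarrow> xs \<noteq> [] \<and> set xs \<subseteq> V \<and>
     (\<forall>i. Suc i < length xs \<longrightarrow> E (xs ! i) (xs ! Suc i))"

definition gdist :: "('a \<Rightarrow> 'a \<Rightarrow> bool) \<Rightarrow> 'a set \<Rightarrow> 'a \<Rightarrow> 'a \<Rightarrow> nat" where
  "gdist E V x y = (LEAST k. \<exists>xs. walk E V xs \<and> hd xs = x \<and> last xs = y \<and> length xs = Suc k)"

definition local_resolving_set :: "('a \<Rightarrow> 'a \<Rightarrow> bool) \<Rightarrow> 'a set \<Rightarrow> 'a set \<Rightarrow> bool" where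
  "local_resolving_set E V W \<longleftrightarrow> W \<subseteq> V \<and>
     (\<forall>u\<in>V - W. \<forall>v\<in>V - W. E u v \<longrightarrow> (\<exists>w\<in>W. gdist E V u w \<noteq> gdist E V v w))"

definition local_metric_dim :: "('a \<Rightarrow> 'a \<Rightarrow> bool) \<Rightarrow> 'a set \<Rightarrow> nat" where
  "local_metric_dim E V = (LEAST k. \<exists>W. local_resolving_set E V W \<and> card W = k)"

definition Kn_minus :: "'a set \<Rightarrow> 'a set \<Rightarrow> 'a set \<Rightarrow> 'a \<Rightarrow> 'a \<Rightarrow> bool" where
  "Kn_minus V A B u v \<longleftrightarrow> u \<in> V \<and> v \<in> V \<and> u \<noteq> v \<and>
     \<not> ((u \<in> A \<and> v \<in> B) \<or> (u \<in> B \<and> v \<in> A))"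

end

theory Submission
  imports Defs
begin

text \<open>The graph has diameter at most two (a universal vertex outside A and B
witnesses this), so every distance between distinct vertices is 1 or 2 and a vertex
w distinguishes u and v exactly when it is adjacent to one but not the other.
Two vertices on the same side of the partition A, B, V - (A \<union> B) are adjacent
twins, so a local resolving set misses at most one vertex of each side, giving
the lower bound n - 3; if B = {b}, then a missed vertex of A and a missed vertex
outside A \<union> B could only be told apart by b, which improves the bound to n - 2.
The bounds are attained by V - {a, b} and V - {a, b, c} with a \<in> A, b \<in> B, c \<notin> A \<union> B.\<close>

lemma walk_short_hd_last:
  assumes "walk E V xs" and "length xs \<le> 2"
  shows "hd xs = last xs \<or> E (hd xs) (last xs)"
proof -
  from assms have "xs \<noteq> []" unfolding walk_def by blast
  with assms(2) consider x where "xs = [x]" | x y where "xs = [x, y]"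
    by (cases xs rule: remdups_adj.cases) auto
  then show ?thesis
    using assms(1) unfolding walk_def by cases auto
qed

lemma gdist_eq_1:
  assumes "E x y" and "x \<in> V" and "y \<in> V" and "x \<noteq> y"
  shows "gdist E V x y = 1"
  unfolding gdist_def
proof (rule Least_equality)
  have "walk E V [x, y]"
    using assms unfolding walk_def by (auto simp: less_Suc_eq)
  then show "\<exists>xs. walk E V xs \<and> hd xs = x \<and> last xs = y \<and> length xs = Suc 1"
    by force
next
  fix k assume "\<exists>xs. walk E V xs \<and> hd xs = x \<and> last xs = y \<and> length xs = Suc k"
  then obtain xs where "walk E V xs" "hd xs = x" "last xs = y" "length xs = Suc k"
    by blast
  then show "1 \<le> k"
    using \<open>x \<noteq> y\<close> by (cases k) (auto simp: length_Suc_conv)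
qed

lemma gdist_eq_2:
  assumes "\<not> E x y" and "x \<in> V" and "y \<in> V" and "x \<noteq> y"
    and "c \<in> V" and "E x c" and "E c y"
  shows "gdist E V x y = 2"
  unfolding gdist_def
proof (rule Least_equality)
  have "walk E V [x, c, y]"
    using assms unfolding walk_def by (auto simp: less_Suc_eq)
  then show "\<exists>xs. walk E V xs \<and> hd xs = x \<and> last xs = y \<and> length xs = Suc 2"
    by force
next
  fix k assume "\<exists>xs. walk E V xs \<and> hd xs = x \<and> last xs = y \<and> length xs = Suc k"
  then obtain xs where "walk E V xs" "hd xs = x" "last xs = y" "length xs = Suc k"
    by blast
  then show "2 \<le> k"
    using walk_short_hd_last[of E V xs] assms(1,4) by fastforce
qed

definition diameter_le_two :: "('a \<Rightarrow> 'a \<Rightarrow> bool) \<Rightarrow> 'a set \<Rightarrow> bool" where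
  "diameter_le_two E V \<longleftrightarrow>
     (\<forall>x\<in>V. \<forall>y\<in>V. x \<noteq> y \<longrightarrow> \<not> E x y \<longrightarrow> (\<exists>c\<in>V. E x c \<and> E c y))"

lemma gdist_diameter_le_two:
  assumes "diameter_le_two E V" and "x \<in> V" and "y \<in> V" and "x \<noteq> y"
  shows "gdist E V x y = (if E x y then 1 else 2)"
proof (cases "E x y")
  case True
  then show ?thesis using gdist_eq_1 assms by auto
next
  case False
  then obtain c where "c \<in> V" "E x c" "E c y"
    using assms unfolding diameter_le_two_def by blast
  then show ?thesis using gdist_eq_2 False assms by auto
qed

lemma local_resolving_set_iff_adjacency:
  assumes "diameter_le_two E V"
  shows "local_resolving_set E V W \<longleftrightarrow> W \<subseteq> V \<and>
    (\<forall>u\<in>V - W. \<forall>v\<in>V - W. E u v \<longrightarrow> (\<exists>w\<in>W. E u w \<noteq> E v w))"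
proof -
  have "gdist E V u w \<noteq> gdist E V v w \<longleftrightarrow> E u w \<noteq> E v w"
    if "u \<in> V - W" "v \<in> V - W" "w \<in> W" "W \<subseteq> V" for u v w
  proof -
    have "u \<in> V" "v \<in> V" "w \<in> V" "u \<noteq> w" "v \<noteq> w" using that by auto
    then show ?thesis
      using gdist_diameter_le_two[OF assms, of u w] gdist_diameter_le_two[OF assms, of v w]
      by auto
  qed
  then show ?thesis
    unfolding local_resolving_set_def by (auto; meson)
qed

lemma local_resolving_set_diameter_le_twoD:
  assumes "diameter_le_two E V" and "local_resolving_set E V W"
    and "u \<in> V - W" and "v \<in> V - W" and "E u v"
  obtains w where "w \<in> W" and "E u w \<noteq> E v w"
  using assms(2-5) unfolding local_resolving_set_iff_adjacency[OF assms(1)] by blast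

lemma local_resolving_set_if_independent_complement:
  assumes "W \<subseteq> V" and "\<forall>u\<in>V - W. \<forall>v\<in>V - W. \<not> E u v"
  shows "local_resolving_set E V W"
  using assms unfolding local_resolving_set_def by blast

lemma local_metric_dim_eqI:
  assumes "local_resolving_set E V W" and "card W = k"
    and "\<And>W. local_resolving_set E V W \<Longrightarrow> k \<le> card W"
  shows "local_metric_dim E V = k"
  unfolding local_metric_dim_def using assms by (intro Least_equality) auto

lemma diameter_le_two_Kn_minus:
  assumes "c \<in> V" and "c \<notin> A" and "c \<notin> B"
  shows "diameter_le_two (Kn_minus V A B) V"
  using assms unfolding diameter_le_two_def Kn_minus_def by metis

definition side :: "'a set \<Rightarrow> 'a set \<Rightarrow> 'a \<Rightarrow> nat" where
  "side A B u = (if u \<in> A then 0 else if u \<in> B then 1 else 2)"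

lemma Kn_minus_same_side_adjacent:
  assumes "A \<inter> B = {}" and "u \<in> V" and "v \<in> V" and "u \<noteq> v"
    and "side A B u = side A B v"
  shows "Kn_minus V A B u v"
  using assms unfolding Kn_minus_def side_def by (auto split: if_splits)

lemma Kn_minus_same_side_twins:
  assumes "A \<inter> B = {}" and "u \<in> V" and "v \<in> V" and "side A B u = side A B v"
    and "w \<noteq> u" and "w \<noteq> v"
  shows "Kn_minus V A B u w = Kn_minus V A B v w"
  using assms unfolding Kn_minus_def side_def by (auto split: if_splits)

lemma side_inj_on_outside_lrs:
  assumes "c \<in> V" and "c \<notin> A" and "c \<notin> B" and "A \<inter> B = {}"
    and "local_resolving_set (Kn_minus V A B) V W"
  shows "inj_on (side A B) (V - W)"
proof (rule inj_onI, rule ccontr)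
  fix u v assume uv: "u \<in> V - W" "v \<in> V - W" "side A B u = side A B v" "u \<noteq> v"
  have "Kn_minus V A B u v"
    using Kn_minus_same_side_adjacent[OF assms(4)] uv by simp
  then obtain w where w: "w \<in> W" "Kn_minus V A B u w \<noteq> Kn_minus V A B v w"
    using local_resolving_set_diameter_le_twoD[OF diameter_le_two_Kn_minus[OF assms(1-3)] assms(5)]
      uv(1,2) by blast
  have "w \<noteq> u" "w \<noteq> v" using w(1) uv by auto
  then show False
    using Kn_minus_same_side_twins[OF assms(4) _ _ uv(3)] uv(1,2) w(2) by blast
qed

lemma local_resolving_set_Kn_minus_card_ge:
  assumes "finite V" and "c \<in> V" and "c \<notin> A" and "c \<notin> B" and "A \<inter> B = {}"
    and "local_resolving_set (Kn_minus V A B) V W"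
  shows "card V - (if card B = 1 then 2 else 3) \<le> card W"
proof -
  have W: "W \<subseteq> V"
    using assms(6) unfolding local_resolving_set_def by simp
  let ?S = "side A B ` (V - W)"
  have sides: "?S \<subseteq> {0, 1, 2}"
    unfolding side_def by auto
  have not_all_sides: "?S \<noteq> {0, 1, 2}" if "card B = 1"
  proof
    assume all: "?S = {0, 1, 2}"
    have "0 \<in> ?S" "1 \<in> ?S" "2 \<in> ?S" unfolding all by simp_all
    then obtain a b d where abd: "a \<in> V - W" "b \<in> V - W" "d \<in> V - W"
      "side A B a = 0" "side A B b = 1" "side A B d = 2"
      by (auto elim!: imageE)
    then have "a \<in> A" "b \<in> B" "d \<notin> A" "d \<notin> B"
      unfolding side_def by (auto split: if_splits)
    moreover have "B = {b}"
      using \<open>card B = 1\<close> \<open>b \<in> B\<close> card_1_singletonE by blast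
    \<comment> \<open>only b could tell a and d apart, but b is not in W\<close>
    ultimately have adjacent: "Kn_minus V A B a d"
      and same: "\<And>w. w \<in> W \<Longrightarrow> Kn_minus V A B a w = Kn_minus V A B d w"
      using abd W assms(5) unfolding Kn_minus_def by auto
    obtain w where "w \<in> W" "Kn_minus V A B a w \<noteq> Kn_minus V A B d w"
      using local_resolving_set_diameter_le_twoD[OF diameter_le_two_Kn_minus[OF assms(2-4)] assms(6)
          abd(1,3) adjacent] .
    then show False
      using same by simp
  qed
  have "card ?S \<le> card {0::nat, 1, 2}"
    using sides by (intro card_mono) auto
  moreover have "card ?S < card {0::nat, 1, 2}" if "card B = 1"
    using sides not_all_sides that by (intro psubset_card_mono) auto
  moreover have "card ?S = card (V - W)"
    using card_image[OF side_inj_on_outside_lrs[OF assms(2-6)]] .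
  moreover have "card (V - W) = card V - card W" "card W \<le> card V"
    using W assms(1) by (auto simp: card_Diff_subset finite_subset card_mono)
  ultimately show ?thesis
    by (cases "card B = 1") auto
qed

lemma local_resolving_set_Kn_minus_remove_two:
  assumes "a \<in> A" and "b \<in> B"
  shows "local_resolving_set (Kn_minus V A B) V (V - {a, b})"
  using assms by (intro local_resolving_set_if_independent_complement) (auto simp: Kn_minus_def)

lemma local_resolving_set_Kn_minus_remove_three:
  assumes "A \<subseteq> V" and "B \<subseteq> V" and "A \<inter> B = {}"
    and "a \<in> A" and "a' \<in> A" and "a' \<noteq> a" and "b \<in> B" and "b' \<in> B" and "b' \<noteq> b"
    and "c \<in> V" and "c \<notin> A" and "c \<notin> B"
  shows "local_resolving_set (Kn_minus V A B) V (V - {a, b, c})"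
  unfolding local_resolving_set_iff_adjacency[OF diameter_le_two_Kn_minus[OF assms(10-12)]]
proof (intro conjI ballI impI)
  let ?E = "Kn_minus V A B" and ?W = "V - {a, b, c}"
  fix u v assume uv: "u \<in> V - ?W" "v \<in> V - ?W" "?E u v"
  \<comment> \<open>the adjacent pairs among a, b, c are {a, c}, separated by b', and {b, c}, separated by a'\<close>
  have "?E a b' \<noteq> ?E c b'" "?E b a' \<noteq> ?E c a'" "\<not> ?E a b" "\<not> ?E b a"
    using assms unfolding Kn_minus_def by auto
  moreover have "a' \<in> ?W" "b' \<in> ?W" "u \<in> {a, b, c}" "v \<in> {a, b, c}" "u \<noteq> v"
    using assms uv unfolding Kn_minus_def by auto
  ultimately show "\<exists>w\<in>?W. ?E u w \<noteq> ?E v w"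
    using uv(3) by auto
qed auto

theorem lemma2p1:
  fixes V A B :: "'a set" and n lam mu :: nat
  assumes "finite V" and "card V = n" and "n \<ge> 3"
    and "A \<subseteq> V" and "B \<subseteq> V" and "A \<inter> B = {}"
    and "card A = lam" and "card B = mu"
    and "1 \<le> mu" and "mu \<le> lam" and "lam + mu \<le> n - 1"
  shows "local_metric_dim (Kn_minus V A B) V = (if mu = 1 then n - 2 else n - 3)"
proof -
  have fin: "finite A" "finite B" using assms finite_subset by auto
  have "card (A \<union> B) < card V" using card_Un_disjoint[OF fin] assms by auto
  then have "A \<union> B \<noteq> V" by auto
  then obtain c where c: "c \<in> V" "c \<notin> A" "c \<notin> B" using assms(4,5) by blast
  have "A \<noteq> {}" "B \<noteq> {}" using assms(7-10) by auto
  then obtain a b where ab: "a \<in> A" "b \<in> B" by blast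
  have distinct: "a \<noteq> b" "a \<noteq> c" "b \<noteq> c" and in_V: "{a, b, c} \<subseteq> V"
    using ab c assms(4-6) by auto
  have lower: "(if mu = 1 then n - 2 else n - 3) \<le> card W"
    if "local_resolving_set (Kn_minus V A B) V W" for W
    using local_resolving_set_Kn_minus_card_ge[OF assms(1) c assms(6) that] assms(2,8) by auto
  show ?thesis
  proof (cases "mu = 1")
    case True
    have "card (V - {a, b}) = n - 2"
      using distinct in_V assms(1,2) by (subst card_Diff_subset) auto
    then show ?thesis
      using True lower
      by (intro local_metric_dim_eqI[OF local_resolving_set_Kn_minus_remove_two[OF ab]]) auto
  next
    case False
    then have "2 \<le> card A" "2 \<le> card B" using assms(7-10) by auto
    then obtain a' b' where a'b': "a' \<in> A" "a' \<noteq> a" "b' \<in> B" "b' \<noteq> b"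
      using ab fin by (metis card_le_Suc0_iff_eq not_less_eq_eq numeral_2_eq_2)
    have "card (V - {a, b, c}) = n - 3"
      using distinct in_V assms(1,2) by (subst card_Diff_subset) auto
    then show ?thesis
      using False lower
      by (intro local_metric_dim_eqI[OF local_resolving_set_Kn_minus_remove_three
            [OF assms(4-6) ab(1) a'b'(1,2) ab(2) a'b'(3,4) c]]) auto
  qed
qed

end
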